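(* Let $(X,d,\mu)$, $p$, $\underline{Q}_\mu$ be as in the context. Fix $\underline{\theta}\in[0,\min\{p,\underline{Q}_\mu\})$, $\theta\in[\underline{\theta},p)$, an integer $N\ge2$, numbers $0\le\theta_1<\dots<\theta_N=\underline{\theta}$, closed sets $S^i\in\mathcal{ADR}_{\theta_i}(X)$, and $\mathfrak m_k:=\sum_{i=1}^N2^{k(\theta-\theta_i)}\mathcal H_{\theta_i}\lfloor_{S^i}$, $k\in\mathbb N_0$. Then for each $c\ge1$ there is a constant $C>0$ such that the following holds. If $k\in\mathbb N_0$, $B=cB_k(\underline x)$ with $\underline x\in X$, and $\mathcal I\subset\{1,\dots,N\}$ are such that for each $i\in\mathcal I$ there is $x_i\in S^i$ with $B_k(x_i)\subset B$, and $B\cap S^j=\emptyset$ for all $j\in\{1,\dots,N\}\setminus\mathcal I$, then for every $f\in L^{loc}_1(\mathfrak m_0)$, $$\mathcal E_{\mathfrak m_k}(f,B)\le C\Big(\sum_{i\in\mathcal I}\mathcal E_{\mathcal H_{\theta_i}\lfloor_{S^i}}(f,B)+\sum_{\substack{i,j\in\mathcal I\\ i\ne j}}\mathrm{Av}_{B\cap S^i,\mathcal H_{\theta_i}}\mathrm{Av}_{B\cap S^j,\mathcal H_{\theta_j}}|f(y')-f(z')|\Big).$$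
   Context: Standing setting: $(X,d)$ complete separable metric space, $\mu$ a Borel regular locally finite outer measure, $\operatorname{supp}\mu=X$, uniformly locally doubling (for every $R>0$, $\sup_{r\in(0,R]}\sup_x\mu(B_{2r}(x))/\mu(B_r(x))<\infty$). Balls are closed, $B_r(x)=\{y:d(x,y)\le r\}$, $cB_r(x)=B_{cr}(x)$, $B_k(x)=B_{2^{-k}}(x)$. A fixed $p\in(1,\infty)$; $X$ supports a weak local $(1,p)$-Poincaré inequality (for every $R>0$ there are $C,\lambda\ge1$ with $\inf_c\frac{1}{\mu(B_r(x))}\int_{B_r(x)}|f-c|d\mu\le Cr(\frac{1}{\mu(B_{\lambda r}(x))}\int_{B_{\lambda r}(x)}(\operatorname{lip}f)^pd\mu)^{1/p}$ for Lipschitz $f$, $x\in X$, $r\in(0,R]$). $\underline{Q}_\mu$ is the infimum of $Q>0$ such that for every $R>0$ there is $C$ with $(r_{B'}/r_B)^Q\le C\mu(B')/\mu(B)$ for balls $B'\subset B$, $0<r_{B'}\le r_B\le R$. Notation: $\mathrm{Av}_{G,\mathfrak m}(g)=\mathfrak m(G)^{-1}\int_Gg\,d\mathfrak m$ if $\mathfrak m(G)>0$, else $0$ (the double mean in the claim is over $y'\in B\cap S^i$ and $z'\in B\cap S^j$); $\mathcal E_{\mathfrak m}(g,G):=\inf_{c\in\mathbb R}\mathrm{Av}_{G,\mathfrak m}(|g-c|)$; $\mathfrak m\lfloor_S(E)=\mathfrak m(E\cap S)$. $\mathcal H_{\vartheta,\delta}(E):=\inf\{\sum\mu(B_{r_i}(x_i))r_i^{-\vartheta}:E\subset\bigcup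 B_{r_i}(x_i),0<r_i<\delta\}$, $\mathcal H_\vartheta=\lim_{\delta\to0}\mathcal H_{\vartheta,\delta}$. $\mathcal{ADR}_\vartheta(X)$: closed $S'$ with $\varkappa_1\mu(B_r(x))r^{-\vartheta}\le\mathcal H_\vartheta(B_r(x)\cap S')\le\varkappa_2\mu(B_r(x))r^{-\vartheta}$ for $x\in S'$, $r\in(0,1]$. *)

theory Defs
  imports "HOL-Analysis.Analysis" "HOL-Probability.Probability"
begin

text \<open>Closed balls B_r(x) are cball x r. The measure mu is represented by its
restriction to the Borel sets (mu is Borel regular, so this determines it).\<close>

definition mu_standing :: "'a::polish_space measure \<Rightarrow> bool" where
  "mu_standing mu \<longleftrightarrow> sets mu = sets borel
     \<and> (\<forall>x. \<exists>r>0. emeasure mu (cball x r) < \<infinity>)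
     \<and> (\<forall>x r. r > 0 \<longrightarrow> emeasure mu (cball x r) > 0)"

definition unif_loc_doubling :: "'a::metric_space measure \<Rightarrow> bool" where
  "unif_loc_doubling mu \<longleftrightarrow> (\<forall>R>0. \<exists>D::real. \<forall>r\<in>{0<..R}. \<forall>x.
      emeasure mu (cball x (2*r)) \<le> ennreal D * emeasure mu (cball x r))"

text \<open>Mean value, with the convention Av = 0 if the measure of G vanishes.\<close>
definition Av :: "'a measure \<Rightarrow> 'a set \<Rightarrow> ('a \<Rightarrow> ennreal) \<Rightarrow> ennreal" where
  "Av m G g = (if emeasure m G > 0 then (\<integral>\<^sup>+x\<in>G. g x \<partial>m) / emeasure m G else 0)"

definition Osc :: "'a measure \<Rightarrow> ('a \<Rightarrow> real) \<Rightarrow> 'a set \<Rightarrow> ennreal" where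
  "Osc m g G = (INF c\<in>(UNIV::real set). Av m G (\<lambda>x. ennreal \<bar>g x - c\<bar>))"

definition lip :: "('a::metric_space \<Rightarrow> real) \<Rightarrow> 'a \<Rightarrow> ennreal" where
  "lip f x = Limsup (at_right 0) (\<lambda>r::real. SUP y\<in>cball x r. ennreal (\<bar>f y - f x\<bar> / r))"

definition weak_local_poincare :: "'a::metric_space measure \<Rightarrow> real \<Rightarrow> bool" where
  "weak_local_poincare mu p \<longleftrightarrow> (\<forall>R>0. \<exists>C\<ge>1. \<exists>lam\<ge>1.
     \<forall>f::'a \<Rightarrow> real. (\<exists>L. L-lipschitz_on UNIV f) \<longrightarrow>
     (\<forall>x. \<forall>r\<in>{0<..R}.
        Osc mu f (cball x r) \<le>
        ennreal (C * r * (enn2real (Av mu (cball x (lam * r))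
                    (\<lambda>y. ennreal (enn2real (lip f y) powr p)))) powr (1/p))))"

definition lower_dim :: "'a::metric_space measure \<Rightarrow> real" where
  "lower_dim mu = Inf {Q::real. Q > 0 \<and> (\<forall>R>0. \<exists>C::real. \<forall>x r x' r'.
      cball x' r' \<subseteq> cball x r \<and> 0 < r' \<and> r' \<le> r \<and> r \<le> R \<longrightarrow>
      ennreal ((r'/r) powr Q) * emeasure mu (cball x r) \<le> ennreal C * emeasure mu (cball x' r'))}"

definition hcont_delta :: "'a::metric_space measure \<Rightarrow> real \<Rightarrow> real \<Rightarrow> 'a set \<Rightarrow> ennreal" where
  "hcont_delta mu th delta E = (INF Cv\<in>{Cv::('a \<times> real) set. countable Cv
        \<and> (\<forall>(x,r)\<in>Cv. 0 < r \<and> r < delta) \<and> E \<subseteq> (\<Union>(x,r)\<in>Cv. cball x r)}.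
      \<integral>\<^sup>+xr. emeasure mu (cball (fst xr) (snd xr)) * ennreal (snd xr powr (-th)) \<partial>count_space Cv)"

definition hmeasure :: "'a::metric_space measure \<Rightarrow> real \<Rightarrow> 'a set \<Rightarrow> ennreal" where
  "hmeasure mu th E = (SUP delta\<in>{0<..}. hcont_delta mu th delta E)"

definition hrestr :: "'a::metric_space measure \<Rightarrow> real \<Rightarrow> 'a set \<Rightarrow> 'a measure" where
  "hrestr mu th S = measure_of UNIV (sets borel) (\<lambda>A. hmeasure mu th (A \<inter> S))"

definition ADR :: "'a::metric_space measure \<Rightarrow> real \<Rightarrow> 'a set set" where
  "ADR mu th = {S. closed S \<and> (\<exists>k1 k2::real. k1 > 0 \<and> k2 > 0 \<and>
      (\<forall>x\<in>S. \<forall>r\<in>{0<..1}.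
         ennreal k1 * emeasure mu (cball x r) * ennreal (r powr (-th)) \<le> hmeasure mu th (cball x r \<inter> S)
       \<and> hmeasure mu th (cball x r \<inter> S) \<le> ennreal k2 * emeasure mu (cball x r) * ennreal (r powr (-th))))}"

definition mk :: "'a::metric_space measure \<Rightarrow> real \<Rightarrow> (nat \<Rightarrow> real) \<Rightarrow> (nat \<Rightarrow> 'a set) \<Rightarrow> nat \<Rightarrow> nat \<Rightarrow> 'a measure" where
  "mk mu th ths S N k = measure_of UNIV (sets borel)
     (\<lambda>A. \<Sum>i\<in>{1..N}. ennreal (2 powr (real k * (th - ths i))) * hmeasure mu (ths i) (A \<inter> S i))"

definition loc_integrable :: "'a::metric_space measure \<Rightarrow> ('a \<Rightarrow> real) \<Rightarrow> bool" where
  "loc_integrable m f \<longleftrightarrow> f \<in> borel_measurable m \<and> (\<forall>x. \<exists>r>0. set_integrable m (cball x r) f)"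

end

(* Write m_k = \<Sum>_i w_i \<nu>_i with \<nu>_i the Hausdorff measure H_{\<theta>_i} restricted to S^i, so that
   \<nu>_j(B) = 0 for j \<notin> I.  Each weighted term w_i \<nu>_i(B) is at most m_k(B), hence
   Av_{m_k,B} |f - c| \<le> \<Sum>_{i\<in>I} Av_{\<nu>_i,B} |f - c|.  Fixing i0 \<in> I with 0 < \<nu>_{i0}(B) < \<infinity> and
   averaging |f y - c| \<le> |f y - f z| + |f z - c| over z with respect to \<nu>_{i0}, every term on the
   right is bounded by a double mean of |f y - f z| plus Av_{\<nu>_{i0},B} |f - c|; the infimum over c
   gives the estimate with C = N.

   The measure theory needed is that H_\<theta>, obtained by Caratheodory's construction from covers
   by small balls, is countably additive on Borel sets: it is a metric outer measure, so closed sets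
   are Caratheodory measurable. *)

theory Submission
  imports Defs
begin

section \<open>Caratheodory's construction from weighted ball covers\<close>

definition ball_covers :: "real \<Rightarrow> 'a::metric_space set \<Rightarrow> ('a \<times> real) set set" where
  "ball_covers d E = {Cv. countable Cv \<and> (\<forall>(x, r)\<in>Cv. 0 < r \<and> r < d) \<and> E \<subseteq> (\<Union>(x, r)\<in>Cv. cball x r)}"

definition cover_content :: "('a::metric_space \<times> real \<Rightarrow> ennreal) \<Rightarrow> real \<Rightarrow> 'a set \<Rightarrow> ennreal" where
  "cover_content W d E = (INF Cv\<in>ball_covers d E. \<integral>\<^sup>+xr. W xr \<partial>count_space Cv)"

definition cover_measure :: "('a::metric_space \<times> real \<Rightarrow> ennreal) \<Rightarrow> 'a set \<Rightarrow> ennreal" where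
  "cover_measure W E = (SUP d\<in>{0<..}. cover_content W d E)"

lemma nn_integral_count_space_mono_set:
  fixes W :: "'b \<Rightarrow> ennreal"
  assumes "A \<subseteq> B"
  shows "(\<integral>\<^sup>+x. W x \<partial>count_space A) \<le> (\<integral>\<^sup>+x. W x \<partial>count_space B)"
  using assms
  by (simp add: nn_integral_count_space_indicator nn_integral_mono indicator_def subset_iff)

lemma nn_integral_count_space_Un_disjoint:
  fixes W :: "'b \<Rightarrow> ennreal"
  assumes "A \<inter> B = {}"
  shows "(\<integral>\<^sup>+x. W x \<partial>count_space (A \<union> B)) = (\<integral>\<^sup>+x. W x \<partial>count_space A) + (\<integral>\<^sup>+x. W x \<partial>count_space B)"
proof -
  have "(\<lambda>x. W x * indicator (A \<union> B) x) = (\<lambda>x. W x * indicator A x + W x * indicator B x)"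
    using assms by (auto simp: indicator_def fun_eq_iff)
  then show ?thesis
    by (simp add: nn_integral_count_space_indicator nn_integral_add)
qed

lemma nn_integral_count_space_UN_le:
  fixes W :: "'b \<Rightarrow> ennreal"
  shows "(\<integral>\<^sup>+x. W x \<partial>count_space (\<Union>n. C n)) \<le> (\<Sum>n. \<integral>\<^sup>+x. W x \<partial>count_space (C n))"
proof -
  have "W x * indicator (\<Union>n. C n) x \<le> (\<Sum>n. W x * indicator (C n) x)" for x
  proof (cases "x \<in> (\<Union>n. C n)")
    case True
    then obtain n where "x \<in> C n" by blast
    then show ?thesis
      using sum_le_suminf[of "\<lambda>n. W x * indicator (C n) x" "{n}"] True by (simp add: summableI)
  qed simp
  then have "(\<integral>\<^sup>+x. W x \<partial>count_space (\<Union>n. C n))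
      \<le> (\<integral>\<^sup>+x. (\<Sum>n. W x * indicator (C n) x) \<partial>count_space UNIV)"
    by (simp add: nn_integral_count_space_indicator nn_integral_mono)
  also have "\<dots> = (\<Sum>n. \<integral>\<^sup>+x. W x * indicator (C n) x \<partial>count_space UNIV)"
    by (rule nn_integral_suminf) simp
  also have "\<dots> = (\<Sum>n. \<integral>\<^sup>+x. W x \<partial>count_space (C n))"
    by (simp add: nn_integral_count_space_indicator)
  finally show ?thesis .
qed

lemma cover_content_empty[simp]: "cover_content W d {} = 0"
proof -
  have "{} \<in> ball_covers d {}" by (simp add: ball_covers_def)
  then have "cover_content W d {} \<le> (\<integral>\<^sup>+xr. W xr \<partial>count_space {})"
    unfolding cover_content_def by (rule INF_lower)
  then show ?thesis by (simp add: nn_integral_count_space_finite)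
qed

lemma cover_content_mono: "A \<subseteq> B \<Longrightarrow> cover_content W d A \<le> cover_content W d B"
  unfolding cover_content_def by (rule INF_superset_mono) (auto simp: ball_covers_def)

lemma cover_content_antimono: "d \<le> d' \<Longrightarrow> cover_content W d' A \<le> cover_content W d A"
  unfolding cover_content_def by (rule INF_superset_mono) (fastforce simp: ball_covers_def)+

lemma cover_content_le_cover_measure: "0 < d \<Longrightarrow> cover_content W d A \<le> cover_measure W A"
  unfolding cover_measure_def by (rule SUP_upper) auto

lemma cover_measure_empty[simp]: "cover_measure W {} = 0"
  unfolding cover_measure_def by simp

lemma cover_measure_mono: "A \<subseteq> B \<Longrightarrow> cover_measure W A \<le> cover_measure W B"
  unfolding cover_measure_def by (rule SUP_mono) (auto intro: cover_content_mono)

lemma cover_content_countably_subadditive: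
  "cover_content W d (\<Union>n. A n) \<le> (\<Sum>n. cover_content W d (A n))"
proof (rule ennreal_le_epsilon)
  fix e :: real
  assume fin: "(\<Sum>n. cover_content W d (A n)) < \<top>" and e: "0 < e"
  have "\<exists>Cv\<in>ball_covers d (A n).
      (\<integral>\<^sup>+xr. W xr \<partial>count_space Cv) < cover_content W d (A n) + ennreal (e * (1/2)^Suc n)" for n
  proof -
    have "cover_content W d (A n) < \<top>"
      using fin ennreal_suminf_lessD by blast
    then have "cover_content W d (A n) < cover_content W d (A n) + ennreal (e * (1/2)^Suc n)"
      using e by (simp add: ennreal_add_left_cancel_less)
    then show ?thesis unfolding cover_content_def[of W d "A n"] by (simp add: INF_less_iff)
  qed
  then obtain Cv where Cv: "\<And>n. Cv n \<in> ball_covers d (A n)"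
    and Cv_le: "\<And>n. (\<integral>\<^sup>+xr. W xr \<partial>count_space (Cv n)) < cover_content W d (A n) + ennreal (e * (1/2)^Suc n)"
    by metis
  have "(\<Union>n. Cv n) \<in> ball_covers d (\<Union>n. A n)"
    using Cv unfolding ball_covers_def by (auto simp: subset_eq) blast+
  then have "cover_content W d (\<Union>n. A n) \<le> (\<integral>\<^sup>+xr. W xr \<partial>count_space (\<Union>n. Cv n))"
    unfolding cover_content_def by (rule INF_lower)
  also have "\<dots> \<le> (\<Sum>n. \<integral>\<^sup>+xr. W xr \<partial>count_space (Cv n))"
    by (rule nn_integral_count_space_UN_le)
  also have "\<dots> \<le> (\<Sum>n. cover_content W d (A n) + ennreal (e * (1/2)^Suc n))"
    by (intro suminf_le less_imp_le[OF Cv_le]) (auto simp: summableI)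
  also have "\<dots> = (\<Sum>n. cover_content W d (A n)) + ennreal e"
  proof -
    have "(\<lambda>n. e * (1/2::real)^Suc n) sums e"
      using sums_mult[OF power_half_series, of e] by simp
    then have "(\<Sum>n. ennreal (e * (1/2)^Suc n)) = ennreal e"
      using e by (subst suminf_ennreal2) (auto simp: sums_iff)
    then show ?thesis
      by (simp add: suminf_add[symmetric] summableI)
  qed
  finally show "cover_content W d (\<Union>n. A n) \<le> (\<Sum>n. cover_content W d (A n)) + ennreal e" .
qed

lemma cover_measure_countably_subadditive:
  "cover_measure W (\<Union>n. A n) \<le> (\<Sum>n. cover_measure W (A n))"
  unfolding cover_measure_def[of W "\<Union>n. A n"]
proof (rule SUP_least)
  fix d :: real
  assume "d \<in> {0<..}"
  then have "(\<Sum>n. cover_content W d (A n)) \<le> (\<Sum>n. cover_measure W (A n))"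
    by (intro suminf_le) (auto intro: cover_content_le_cover_measure simp: summableI)
  then show "cover_content W d (\<Union>n. A n) \<le> (\<Sum>n. cover_measure W (A n))"
    using cover_content_countably_subadditive order_trans by blast
qed

lemma cover_measure_subadditive: "cover_measure W (A \<union> B) \<le> cover_measure W A + cover_measure W B"
proof -
  define F where "F n = (if n = 0 then A else if n = 1 then B else {})" for n :: nat
  have "A \<union> B = (\<Union>n. F n)" unfolding F_def by (auto split: if_splits)
  then have "cover_measure W (A \<union> B) \<le> (\<Sum>n. cover_measure W (F n))"
    using cover_measure_countably_subadditive by metis
  also have "\<dots> = (\<Sum>n\<in>{0, 1}. cover_measure W (F n))"
    by (rule suminf_finite) (auto simp: F_def)
  finally show ?thesis by (simp add: F_def)
qed

lemma ball_covers_restrict: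
  assumes Cv: "Cv \<in> ball_covers d E'" and "E \<subseteq> E'"
  shows "{xr \<in> Cv. cball (fst xr) (snd xr) \<inter> E \<noteq> {}} \<in> ball_covers d E"
proof -
  have "E \<subseteq> (\<Union>(x, r)\<in>{xr \<in> Cv. cball (fst xr) (snd xr) \<inter> E \<noteq> {}}. cball x r)"
  proof
    fix a
    assume a: "a \<in> E"
    then obtain x r where "(x, r) \<in> Cv" "a \<in> cball x r"
      using Cv \<open>E \<subseteq> E'\<close> unfolding ball_covers_def by blast
    with a show "a \<in> (\<Union>(x, r)\<in>{xr \<in> Cv. cball (fst xr) (snd xr) \<inter> E \<noteq> {}}. cball x r)"
      by force
  qed
  with Cv show ?thesis
    unfolding ball_covers_def by (auto intro: countable_subset)
qed

lemma cover_content_Un_separated: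
  assumes d: "0 < d" "2 * d \<le> s" and sep: "\<And>a b. a \<in> A \<Longrightarrow> b \<in> B \<Longrightarrow> s \<le> dist a b"
  shows "cover_content W d A + cover_content W d B \<le> cover_content W d (A \<union> B)"
  unfolding cover_content_def[of W d "A \<union> B"]
proof (rule INF_greatest)
  fix Cv
  assume Cv: "Cv \<in> ball_covers d (A \<union> B)"
  define CA where "CA = {xr\<in>Cv. cball (fst xr) (snd xr) \<inter> A \<noteq> {}}"
  define CB where "CB = {xr\<in>Cv. cball (fst xr) (snd xr) \<inter> B \<noteq> {}}"
  have CA: "CA \<in> ball_covers d A" and CB: "CB \<in> ball_covers d B"
    unfolding CA_def CB_def using Cv by (auto intro: ball_covers_restrict)
  have "CA \<inter> CB = {}"
  proof (rule ccontr)
    assume "CA \<inter> CB \<noteq> {}"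
    then obtain x r a b where "(x, r) \<in> Cv" "a \<in> A" "b \<in> B" "dist x a \<le> r" "dist x b \<le> r"
      unfolding CA_def CB_def by auto
    moreover from this have "r < d" using Cv by (auto simp: ball_covers_def)
    ultimately have "dist a b < s"
      using dist_triangle3[of a b x] d by linarith
    with sep \<open>a \<in> A\<close> \<open>b \<in> B\<close> show False by fastforce
  qed
  then have "cover_content W d A + cover_content W d B \<le> (\<integral>\<^sup>+xr. W xr \<partial>count_space (CA \<union> CB))"
    unfolding cover_content_def nn_integral_count_space_Un_disjoint[OF \<open>CA \<inter> CB = {}\<close>]
    by (intro add_mono INF_lower CA CB)
  also have "\<dots> \<le> (\<integral>\<^sup>+xr. W xr \<partial>count_space Cv)"
    by (rule nn_integral_count_space_mono_set) (auto simp: CA_def CB_def)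
  finally show "cover_content W d A + cover_content W d B \<le> (\<integral>\<^sup>+xr. W xr \<partial>count_space Cv)" .
qed

lemma cover_measure_Un_separated:
  assumes s: "0 < s" and sep: "\<And>a b. a \<in> A \<Longrightarrow> b \<in> B \<Longrightarrow> s \<le> dist a b"
  shows "cover_measure W A + cover_measure W B \<le> cover_measure W (A \<union> B)"
proof -
  have "cover_measure W A + cover_measure W B
      = (SUP d'\<in>{0<..}. SUP d\<in>{0<..}. cover_content W d A + cover_content W d' B)"
    unfolding cover_measure_def by (simp add: ennreal_SUP_add_left[symmetric] ennreal_SUP_add_right)
  also have "\<dots> \<le> cover_measure W (A \<union> B)"
  proof (intro SUP_least)
    fix d d' :: real
    assume "d' \<in> {0<..}" "d \<in> {0<..}"
    define \<delta> where "\<delta> = min (min d d') (s / 2)"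
    have \<delta>: "0 < \<delta>" "2 * \<delta> \<le> s"
      using s \<open>d \<in> {0<..}\<close> \<open>d' \<in> {0<..}\<close> by (auto simp: \<delta>_def)
    have "cover_content W d A + cover_content W d' B \<le> cover_content W \<delta> A + cover_content W \<delta> B"
      by (intro add_mono cover_content_antimono) (auto simp: \<delta>_def)
    also have "\<dots> \<le> cover_content W \<delta> (A \<union> B)"
      by (rule cover_content_Un_separated[OF \<delta> sep])
    also have "\<dots> \<le> cover_measure W (A \<union> B)"
      by (rule cover_content_le_cover_measure[OF \<delta>(1)])
    finally show "cover_content W d A + cover_content W d' B \<le> cover_measure W (A \<union> B)" .
  qed
  finally show ?thesis .
qed

lemma cover_measure_sum_le_separated:
  fixes A :: "nat \<Rightarrow> 'a::metric_space set"
  assumes sep: "\<And>m. 0 < m \<Longrightarrow> \<exists>s>0. \<forall>a\<in>(\<Union>k<m. A k). \<forall>b\<in>A m. s \<le> dist a b"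
  shows "(\<Sum>k<m. cover_measure W (A k)) \<le> cover_measure W (\<Union>k<m. A k)"
proof (induction m)
  case (Suc m)
  have "(\<Sum>k<Suc m. cover_measure W (A k)) \<le> cover_measure W (\<Union>k<m. A k) + cover_measure W (A m)"
    using Suc by (simp add: add_right_mono)
  also have "\<dots> \<le> cover_measure W (\<Union>k<Suc m. A k)"
  proof (cases "m = 0")
    case False
    then obtain s where "0 < s" "\<forall>a\<in>(\<Union>k<m. A k). \<forall>b\<in>A m. s \<le> dist a b"
      using sep by blast
    then have "cover_measure W (\<Union>k<m. A k) + cover_measure W (A m) \<le> cover_measure W ((\<Union>k<m. A k) \<union> A m)"
      by (intro cover_measure_Un_separated) auto
    then show ?thesis by (simp add: lessThan_Suc Un_commute)
  qed (simp add: lessThan_Suc)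
  finally show ?case .
qed simp

lemma sum_lessThan_double:
  fixes f :: "nat \<Rightarrow> 'b::comm_monoid_add"
  shows "(\<Sum>k<2 * m. f k) = (\<Sum>k<m. f (2 * k)) + (\<Sum>k<m. f (2 * k + 1))"
  by (induction m) (simp_all add: algebra_simps)

lemma suminf_le_of_even_odd_sums_le:
  fixes f :: "nat \<Rightarrow> ennreal"
  assumes even: "\<And>m. (\<Sum>k<m. f (2 * k)) \<le> c" and odd: "\<And>m. (\<Sum>k<m. f (2 * k + 1)) \<le> c"
  shows "(\<Sum>k. f k) \<le> 2 * c"
  unfolding suminf_eq_SUP
proof (rule SUP_least)
  fix n
  have "(\<Sum>k<n. f k) \<le> (\<Sum>k<2 * n. f k)"
    by (rule sum_mono2) auto
  also have "\<dots> \<le> c + c"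
    unfolding sum_lessThan_double by (intro add_mono even odd)
  finally show "(\<Sum>k<n. f k) \<le> 2 * c" by (simp add: mult_2)
qed

lemma ennreal_suminf_tail_le:
  fixes f :: "nat \<Rightarrow> ennreal"
  assumes fin: "(\<Sum>k. f k) < \<top>" and e: "0 < e"
  shows "\<exists>n. (\<Sum>k. f (k + n)) \<le> ennreal e"
proof -
  define a where "a k = enn2real (f k)" for k
  have f_eq: "f k = ennreal (a k)" for k
    using ennreal_suminf_lessD[OF fin] by (simp add: a_def less_top)
  have "summable a"
  proof (rule summable_suminf_not_top)
    show "0 \<le> a k" for k by (simp add: a_def)
    show "(\<Sum>k. ennreal (a k)) \<noteq> \<top>" using fin by (simp add: f_eq[symmetric])
  qed
  then obtain n where n: "norm (\<Sum>k. a (k + n)) < e"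
    using suminf_exist_split[OF e] by blast
  have "(\<Sum>k. f (k + n)) = ennreal (\<Sum>k. a (k + n))"
    unfolding f_eq using summable_ignore_initial_segment[OF \<open>summable a\<close>, of n]
    by (intro suminf_ennreal2) (auto simp: a_def)
  also have "\<dots> \<le> ennreal e"
    using n by (intro ennreal_leI) auto
  finally show ?thesis by blast
qed

definition infdist_layer :: "'a::metric_space set \<Rightarrow> nat \<Rightarrow> 'a set" where
  "infdist_layer F k = {x. 1 / (real k + 2) < infdist x F \<and> infdist x F \<le> 1 / (real k + 1)}"

lemma infdist_layers_separated:
  assumes "j + 2 \<le> k" "a \<in> infdist_layer F j" "b \<in> infdist_layer F k"
  shows "1 / (real k * (real k + 1)) \<le> dist a b"
proof -
  have "1 / real k \<le> 1 / (real j + 2)"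
    using assms(1) by (intro divide_left_mono) auto
  then have "1 / real k - 1 / (real k + 1) \<le> infdist a F - infdist b F"
    using assms(2,3) by (auto simp: infdist_layer_def)
  also have "\<dots> \<le> dist a b"
    using infdist_triangle[of a F b] by simp
  finally show ?thesis
    using assms(1) by (simp add: field_simps)
qed

lemma ex_infdist_layer:
  assumes "closed F" "F \<noteq> {}" "x \<notin> F" "infdist x F \<le> 1 / (real n + 1)"
  shows "\<exists>k. x \<in> infdist_layer F (k + n)"
proof -
  define t where "t = infdist x F"
  have "0 < t"
    using assms in_closed_iff_infdist_zero[of F x] infdist_nonneg[of x F] by (auto simp: t_def)
  define j where "j = nat \<lfloor>1 / t\<rfloor>"
  have "real n + 1 \<le> 1 / t" using \<open>0 < t\<close> assms(4) by (simp add: t_def field_simps)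
  then have j: "real j \<le> 1 / t" "1 / t < real j + 1" "n + 1 \<le> j"
    unfolding j_def by linarith+
  then have "real (j - 1 - n + n) = real j - 1" by simp
  with j \<open>0 < t\<close> have "x \<in> infdist_layer F (j - 1 - n + n)"
    by (simp add: infdist_layer_def t_def[symmetric] field_simps)
  then show ?thesis by blast
qed

text \<open>The layers are summable because alternate ones are separated, so that the even and the odd
  part of the series are both bounded by \<open>cover_measure W T\<close>.\<close>
lemma suminf_cover_measure_infdist_layer_le:
  "(\<Sum>k. cover_measure W (T \<inter> infdist_layer F k)) \<le> 2 * cover_measure W T"
proof -
  have alternate: "(\<Sum>k<m. cover_measure W (T \<inter> infdist_layer F (2 * k + p))) \<le> cover_measure W T"
    for m p
  proof -
    have "(\<Sum>k<m. cover_measure W (T \<inter> infdist_layer F (2 * k + p)))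
        \<le> cover_measure W (\<Union>k<m. T \<inter> infdist_layer F (2 * k + p))"
    proof (rule cover_measure_sum_le_separated)
      fix m :: nat
      assume "0 < m"
      show "\<exists>s>0. \<forall>a\<in>(\<Union>k<m. T \<inter> infdist_layer F (2 * k + p)).
          \<forall>b\<in>T \<inter> infdist_layer F (2 * m + p). s \<le> dist a b"
      proof (intro exI conjI ballI)
        show "0 < 1 / (real (2 * m + p) * (real (2 * m + p) + 1))"
          using \<open>0 < m\<close> by simp
        fix a b
        assume "a \<in> (\<Union>k<m. T \<inter> infdist_layer F (2 * k + p))" "b \<in> T \<inter> infdist_layer F (2 * m + p)"
        then obtain k where "k < m" "a \<in> infdist_layer F (2 * k + p)" "b \<in> infdist_layer F (2 * m + p)"
          by blast
        then show "1 / (real (2 * m + p) * (real (2 * m + p) + 1)) \<le> dist a b"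
          by (intro infdist_layers_separated[of "2 * k + p"]) auto
      qed
    qed
    also have "\<dots> \<le> cover_measure W T"
      by (rule cover_measure_mono) auto
    finally show ?thesis .
  qed
  show ?thesis
  proof (rule suminf_le_of_even_odd_sums_le)
    show "(\<Sum>k<m. cover_measure W (T \<inter> infdist_layer F (2 * k))) \<le> cover_measure W T" for m
      using alternate[where m = m and p = 0] by simp
  qed (rule alternate)
qed

text \<open>Caratheodory's criterion: up to the tail of the convergent series of layers, \<open>T - F\<close> is
  covered by a set at positive distance from \<open>F\<close>.\<close>
lemma cover_measure_closed_split:
  assumes F: "closed F"
  shows "cover_measure W (T \<inter> F) + cover_measure W (T - F) \<le> cover_measure W T"
proof (cases "F = {}")
  case False
  define A where "A n = {x \<in> T - F. 1 / (real n + 1) < infdist x F}" for n :: nat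
  have A: "cover_measure W (T \<inter> F) + cover_measure W (A n) \<le> cover_measure W T" for n
  proof -
    have "1 / (real n + 1) \<le> dist a b" if "a \<in> T \<inter> F" "b \<in> A n" for a b
      using that infdist_le[of a F b] by (auto simp: A_def dist_commute)
    then have "cover_measure W (T \<inter> F) + cover_measure W (A n) \<le> cover_measure W (T \<inter> F \<union> A n)"
      by (intro cover_measure_Un_separated) auto
    also have "\<dots> \<le> cover_measure W T"
      by (rule cover_measure_mono) (auto simp: A_def)
    finally show ?thesis .
  qed
  show ?thesis
  proof (rule ennreal_le_epsilon)
    fix e :: real
    assume "cover_measure W T < \<top>" "0 < e"
    then have "2 * cover_measure W T < \<top>"
      by (simp add: ennreal_mult_less_top)
    then have "(\<Sum>k. cover_measure W (T \<inter> infdist_layer F k)) < \<top>"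
      by (rule le_less_trans[OF suminf_cover_measure_infdist_layer_le])
    then obtain n where n: "(\<Sum>k. cover_measure W (T \<inter> infdist_layer F (k + n))) \<le> ennreal e"
      using ennreal_suminf_tail_le \<open>0 < e\<close> by blast
    have "T - F \<subseteq> A n \<union> (\<Union>k. T \<inter> infdist_layer F (k + n))"
      using ex_infdist_layer[OF F False] by (force simp: A_def not_less)
    then have "cover_measure W (T - F) \<le> cover_measure W (A n \<union> (\<Union>k. T \<inter> infdist_layer F (k + n)))"
      by (rule cover_measure_mono)
    also have "\<dots> \<le> cover_measure W (A n) + cover_measure W (\<Union>k. T \<inter> infdist_layer F (k + n))"
      by (rule cover_measure_subadditive)
    also have "\<dots> \<le> cover_measure W (A n) + ennreal e"
      by (intro add_left_mono order_trans[OF cover_measure_countably_subadditive n])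
    finally have "cover_measure W (T \<inter> F) + cover_measure W (T - F)
        \<le> (cover_measure W (T \<inter> F) + cover_measure W (A n)) + ennreal e"
      by (simp add: add.assoc add_left_mono)
    also have "\<dots> \<le> cover_measure W T + ennreal e"
      by (intro add_right_mono A)
    finally show "cover_measure W (T \<inter> F) + cover_measure W (T - F) \<le> cover_measure W T + ennreal e" .
  qed
qed simp

lemma outer_measure_space_cover_measure: "outer_measure_space (Pow UNIV) (cover_measure W)"
  unfolding outer_measure_space_def positive_def increasing_def countably_subadditive_def
  by (auto simp: cover_measure_mono cover_measure_countably_subadditive)

lemma closed_in_lambda_system_cover_measure:
  assumes "closed F"
  shows "F \<in> lambda_system UNIV (Pow UNIV) (cover_measure W)"
  unfolding lambda_system_def
proof safe
  fix T :: "'a set"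
  have "cover_measure W T \<le> cover_measure W (T \<inter> F) + cover_measure W (T - F)"
    using cover_measure_subadditive[of W "T \<inter> F" "T - F"] by (simp add: Int_Diff_Un)
  with cover_measure_closed_split[OF assms, of W T]
  show "cover_measure W (F \<inter> T) + cover_measure W ((UNIV - F) \<inter> T) = cover_measure W T"
    by (simp add: Int_commute Diff_eq)
qed auto

lemma countably_additive_cover_measure: "countably_additive (sets borel) (cover_measure W)"
proof -
  interpret Pow: sigma_algebra "UNIV :: 'a set" "Pow UNIV"
    by (rule sigma_algebra_Pow)
  have "measure_space UNIV (lambda_system UNIV (Pow UNIV) (cover_measure W)) (cover_measure W)"
    by (rule Pow.caratheodory_lemma[OF outer_measure_space_cover_measure])
  then have ca: "countably_additive (lambda_system UNIV (Pow UNIV) (cover_measure W)) (cover_measure W)"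
    and "sigma_algebra UNIV (lambda_system UNIV (Pow UNIV) (cover_measure W))"
    by (auto simp: measure_space_def)
  then interpret L: sigma_algebra UNIV "lambda_system UNIV (Pow UNIV) (cover_measure W)"
    by simp
  have "sets (borel :: 'a measure) = sigma_sets UNIV (Collect closed)"
    unfolding borel_eq_closed by (rule sets_measure_of) simp
  moreover have "sigma_sets UNIV (Collect closed) \<subseteq> lambda_system UNIV (Pow UNIV) (cover_measure W)"
    by (rule L.sigma_sets_subset) (use closed_in_lambda_system_cover_measure in blast)
  ultimately have "sets borel \<subseteq> lambda_system UNIV (Pow UNIV) (cover_measure W)"
    by (simp only:)
  with ca show ?thesis
    unfolding countably_additive_def by blast
qed

section \<open>Averages and oscillations\<close>

lemma Av_mono:
  assumes "\<And>x. x \<in> G \<Longrightarrow> g x \<le> h x"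
  shows "Av m G g \<le> Av m G h"
  unfolding Av_def using assms
  by (auto intro!: divide_right_mono_ennreal nn_integral_mono simp: indicator_def)

lemma Av_add:
  assumes "G \<in> sets m" "g \<in> borel_measurable m" "h \<in> borel_measurable m"
  shows "Av m G (\<lambda>x. g x + h x) = Av m G g + Av m G h"
  unfolding Av_def using assms
  by (simp add: distrib_right nn_integral_add add_divide_distrib_ennreal)

lemma Av_const:
  assumes "G \<in> sets m" "0 < emeasure m G" "emeasure m G < \<top>"
  shows "Av m G (\<lambda>_. c) = c"
  using assms
  by (simp add: Av_def nn_integral_cmult_indicator top.not_eq_extremum mult_divide_eq_ennreal)

lemma Av_const_le:
  assumes "G \<in> sets m"
  shows "Av m G (\<lambda>_. c) \<le> c"
proof (cases "0 < emeasure m G \<and> emeasure m G < \<top>")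
  case True
  then show ?thesis using Av_const[OF assms] by simp
qed (auto simp: Av_def less_top[symmetric])

lemma Osc_le_Av: "Osc m f G \<le> Av m G (\<lambda>x. ennreal \<bar>f x - c\<bar>)"
  unfolding Osc_def by (rule INF_lower) simp

lemma Osc_eq_0_of_Av_eq_0:
  assumes "\<And>g. Av m G g = 0"
  shows "Osc m f G = 0"
  using Osc_le_Av[of m f G 0] assms by simp

lemma INF_ennreal_cmult_add:
  fixes g :: "'b \<Rightarrow> ennreal"
  assumes "a < \<top>"
  shows "(INF c. a * g c + d) = a * (INF c. g c) + d"
proof -
  have "continuous_on UNIV (\<lambda>y. a * y + d)"
    using assms by (intro continuous_on_add ennreal_continuous_on_cmult continuous_on_id continuous_on_const)
  then have "continuous (at_right (Inf (range g))) (\<lambda>y. a * y + d)"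
    by (simp add: continuous_on_eq_continuous_at continuous_at_imp_continuous_at_within)
  then show ?thesis
    by (subst continuous_at_Inf_mono[of "\<lambda>y. a * y + d"])
       (auto simp: mono_def intro: add_right_mono mult_left_mono simp: image_comp)
qed

lemma nn_integral_weighted_sum_measure:
  fixes w :: "'i \<Rightarrow> ennreal"
  assumes J: "finite J" and sets_eq: "\<And>i. i \<in> J \<Longrightarrow> sets (\<nu> i) = sets M"
    and emeasure_eq: "\<And>A. A \<in> sets M \<Longrightarrow> emeasure M A = (\<Sum>i\<in>J. w i * emeasure (\<nu> i) A)"
    and g: "g \<in> borel_measurable M"
  shows "integral\<^sup>N M g = (\<Sum>i\<in>J. w i * integral\<^sup>N (\<nu> i) g)"
proof -
  have meas: "h \<in> borel_measurable (\<nu> i)" if "i \<in> J" "h \<in> borel_measurable M"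
    for i and h :: "'a \<Rightarrow> ennreal"
    using sets_eq[OF that(1)] that(2) by (simp cong: measurable_cong_sets)
  show ?thesis
    using g
  proof (induction rule: borel_measurable_induct)
    case (cong f g)
    have "integral\<^sup>N (\<nu> i) f = integral\<^sup>N (\<nu> i) g" if "i \<in> J" for i
      using cong sets_eq_imp_space_eq[OF sets_eq[OF that]] by (intro nn_integral_cong) auto
    moreover have "integral\<^sup>N M f = integral\<^sup>N M g"
      using cong by (intro nn_integral_cong) auto
    ultimately show ?case
      using cong by (simp cong: sum.cong)
  next
    case (set A)
    then show ?case using sets_eq by (simp add: emeasure_eq)
  next
    case (mult u c)
    then show ?case using meas
      by (simp add: nn_integral_cmult sum_distrib_left ac_simps)
  next
    case (add u v)
    then show ?case using meas
      by (simp add: nn_integral_add distrib_left sum.distrib)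
  next
    case (seq U)
    have "integral\<^sup>N M (SUP j. U j) = (SUP j. integral\<^sup>N M (U j))"
      unfolding SUP_apply[abs_def] using seq by (intro nn_integral_monotone_convergence_SUP) auto
    also have "\<dots> = (SUP j. \<Sum>i\<in>J. w i * integral\<^sup>N (\<nu> i) (U j))"
      using seq by simp
    also have "\<dots> = (\<Sum>i\<in>J. SUP j. w i * integral\<^sup>N (\<nu> i) (U j))"
    proof (rule ennreal_SUP_sum)
      show "incseq (\<lambda>j. w i * integral\<^sup>N (\<nu> i) (U j))" for i
        using \<open>incseq U\<close> unfolding incseq_def le_fun_def
        by (intro allI impI mult_left_mono nn_integral_mono) simp_all
    qed
    also have "\<dots> = (\<Sum>i\<in>J. w i * integral\<^sup>N (\<nu> i) (SUP j. U j))"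
    proof (rule sum.cong[OF refl])
      fix i assume i: "i \<in> J"
      have "U j \<in> borel_measurable (\<nu> i)" for j
        by (rule meas[OF i seq(1)])
      then have "(SUP j. integral\<^sup>N (\<nu> i) (U j)) = integral\<^sup>N (\<nu> i) (SUP j. U j)"
        unfolding SUP_apply[abs_def] using \<open>incseq U\<close>
        by (intro nn_integral_monotone_convergence_SUP[symmetric]) auto
      then show "(SUP j. w i * integral\<^sup>N (\<nu> i) (U j)) = w i * integral\<^sup>N (\<nu> i) (SUP j. U j)"
        by (metis SUP_mult_left_ennreal)
    qed
    finally show ?case .
  qed
qed

lemma weighted_set_nn_integral_le_Av:
  assumes B: "B \<in> sets \<nu>" and le: "w * emeasure \<nu> B \<le> x" and fin: "x < \<top>"
  shows "w * set_nn_integral \<nu> B g \<le> x * Av \<nu> B g"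
proof (cases "w = 0 \<or> emeasure \<nu> B = 0")
  case True
  then show ?thesis
    using B by (auto simp: null_sets_def nn_integral_null_set[of B \<nu>])
next
  case False
  then have b: "0 < emeasure \<nu> B" "emeasure \<nu> B < \<top>"
    using le fin by (auto simp: ennreal_mult_less_top dest: le_less_trans)
  have "w * set_nn_integral \<nu> B g = w * (emeasure \<nu> B * set_nn_integral \<nu> B g / emeasure \<nu> B)"
    using b by (simp add: mult.commute[of "emeasure \<nu> B"] mult_divide_eq_ennreal)
  also have "\<dots> = (w * emeasure \<nu> B) * (set_nn_integral \<nu> B g / emeasure \<nu> B)"
    by (simp add: ennreal_times_divide mult.assoc)
  also have "\<dots> \<le> x * Av \<nu> B g"
    using b le by (simp add: Av_def mult_right_mono)
  finally show ?thesis .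
qed

lemma Av_le_sum_Av:
  fixes w :: "'i \<Rightarrow> ennreal"
  assumes J: "finite J" and sets_eq: "\<And>i. i \<in> J \<Longrightarrow> sets (\<nu> i) = sets M"
    and emeasure_eq: "\<And>A. A \<in> sets M \<Longrightarrow> emeasure M A = (\<Sum>i\<in>J. w i * emeasure (\<nu> i) A)"
    and B: "B \<in> sets M" and g: "g \<in> borel_measurable M"
  shows "Av M B g \<le> (\<Sum>i\<in>J. Av (\<nu> i) B g)"
proof (cases "0 < emeasure M B \<and> emeasure M B < \<top>")
  case True
  have "set_nn_integral M B g = (\<Sum>i\<in>J. w i * set_nn_integral (\<nu> i) B g)"
    using g B by (intro nn_integral_weighted_sum_measure[OF J sets_eq emeasure_eq]) auto
  also have "\<dots> \<le> (\<Sum>i\<in>J. emeasure M B * Av (\<nu> i) B g)"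
  proof (intro sum_mono weighted_set_nn_integral_le_Av)
    fix i assume "i \<in> J"
    then show "B \<in> sets (\<nu> i)" "w i * emeasure (\<nu> i) B \<le> emeasure M B"
      using B sets_eq J by (auto simp: emeasure_eq intro: member_le_sum)
  qed (use True in simp)
  finally show ?thesis
    using True by (simp add: Av_def sum_distrib_left divide_le_posI_ennreal)
qed (auto simp: Av_def less_top[symmetric])

lemma measurable_Av_dist:
  fixes f :: "'a \<Rightarrow> real"
  assumes sets_eq: "sets \<nu> = sets M" and B: "B \<in> sets M" and fin: "emeasure \<nu> B < \<top>"
    and f: "f \<in> borel_measurable M"
  shows "(\<lambda>y. Av \<nu> B (\<lambda>z. ennreal \<bar>f y - f z\<bar>)) \<in> borel_measurable M"
proof -
  define \<nu>' where "\<nu>' = density \<nu> (indicator B)"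
  have sets': "sets \<nu>' = sets M" by (simp add: \<nu>'_def sets_eq)
  have B': "B \<in> sets \<nu>" using B sets_eq by simp
  then have "emeasure \<nu>' (space \<nu>') = emeasure \<nu> B"
    by (simp add: \<nu>'_def emeasure_density borel_measurable_indicator
        indicator_inter_arith[symmetric] sets.Int_space_eq2)
  then interpret \<nu>': finite_measure \<nu>'
    using fin by (intro finite_measureI) simp
  have "f \<in> borel_measurable \<nu>'"
    using f sets' by (simp cong: measurable_cong_sets)
  then have "(\<lambda>(y, z). ennreal \<bar>f y - f z\<bar>) \<in> borel_measurable (M \<Otimes>\<^sub>M \<nu>')"
    using f by measurable
  then have "(\<lambda>y. \<integral>\<^sup>+z. ennreal \<bar>f y - f z\<bar> \<partial>\<nu>') \<in> borel_measurable M"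
    by (rule \<nu>'.borel_measurable_nn_integral)
  moreover have "Av \<nu> B (\<lambda>z. ennreal \<bar>f y - f z\<bar>)
      = (if 0 < emeasure \<nu> B then (\<integral>\<^sup>+z. ennreal \<bar>f y - f z\<bar> \<partial>\<nu>') * inverse (emeasure \<nu> B) else 0)" for y
  proof -
    have "(\<lambda>z. ennreal \<bar>f y - f z\<bar>) \<in> borel_measurable \<nu>"
      using f sets_eq by (simp cong: measurable_cong_sets)
    then show ?thesis
      using B sets_eq
      by (simp add: Av_def \<nu>'_def nn_integral_density divide_ennreal_def mult.commute)
  qed
  ultimately show ?thesis by simp
qed

lemma ennreal_abs_diff_triangle: "ennreal \<bar>a - c\<bar> \<le> ennreal \<bar>a - b\<bar> + ennreal \<bar>b - c\<bar>"
  by (simp add: ennreal_plus[symmetric] del: ennreal_plus)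

lemma Av_dist_const_le:
  fixes f :: "'a \<Rightarrow> real"
  assumes sets_eq: "sets \<nu> = sets M" "sets \<nu>' = sets M" and B: "B \<in> sets M"
    and pos: "0 < emeasure \<nu>' B" and fin: "emeasure \<nu>' B < \<top>"
    and f: "f \<in> borel_measurable M"
  shows "Av \<nu> B (\<lambda>y. ennreal \<bar>f y - c\<bar>)
    \<le> Av \<nu> B (\<lambda>y. Av \<nu>' B (\<lambda>z. ennreal \<bar>f y - f z\<bar>)) + Av \<nu>' B (\<lambda>z. ennreal \<bar>f z - c\<bar>)"
proof -
  define G where "G y = Av \<nu>' B (\<lambda>z. ennreal \<bar>f y - f z\<bar>)" for y
  define K where "K = Av \<nu>' B (\<lambda>z. ennreal \<bar>f z - c\<bar>)"
  have f': "f \<in> borel_measurable \<nu>" "f \<in> borel_measurable \<nu>'"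
    using f sets_eq by (simp_all cong: measurable_cong_sets)
  have "ennreal \<bar>f y - c\<bar> \<le> G y + K" for y
  proof -
    have "ennreal \<bar>f y - c\<bar> = Av \<nu>' B (\<lambda>_. ennreal \<bar>f y - c\<bar>)"
      using B sets_eq pos fin by (simp add: Av_const)
    also have "\<dots> \<le> Av \<nu>' B (\<lambda>z. ennreal \<bar>f y - f z\<bar> + ennreal \<bar>f z - c\<bar>)"
      by (intro Av_mono ennreal_abs_diff_triangle)
    also have "\<dots> = G y + K"
      using B sets_eq f' by (simp add: Av_add G_def K_def)
    finally show ?thesis .
  qed
  then have "Av \<nu> B (\<lambda>y. ennreal \<bar>f y - c\<bar>) \<le> Av \<nu> B (\<lambda>y. G y + K)"
    by (intro Av_mono)
  also have "\<dots> = Av \<nu> B G + Av \<nu> B (\<lambda>_. K)"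
  proof (rule Av_add)
    show "G \<in> borel_measurable \<nu>"
      using measurable_Av_dist[OF sets_eq(2) B fin f] sets_eq
      unfolding G_def by (simp cong: measurable_cong_sets)
  qed (use B sets_eq in auto)
  also have "\<dots> \<le> Av \<nu> B G + K"
    using B sets_eq by (intro add_left_mono Av_const_le) simp
  finally show ?thesis by (simp add: G_def[abs_def] K_def)
qed

lemma sum_weighted_eq_0_or_top:
  fixes w b :: "'i \<Rightarrow> ennreal"
  assumes J: "finite J" and w: "\<And>i. i \<in> J \<Longrightarrow> 0 < w i" and x: "x = (\<Sum>i\<in>J. w i * b i)"
    and b: "\<And>i. i \<in> J \<Longrightarrow> b i = 0 \<or> b i = \<top>"
  shows "x = 0 \<or> x = \<top>"
proof (cases "\<exists>i\<in>J. b i = \<top>")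
  case True
  then obtain i where i: "i \<in> J" "b i = \<top>" by blast
  then have "\<top> = w i * b i"
    using w[OF i(1)] by (simp add: ennreal_mult_top)
  also have "\<dots> \<le> x"
    unfolding x using i J by (intro member_le_sum) auto
  finally show ?thesis by (simp add: top_unique)
next
  case False
  with b have "\<forall>i\<in>J. b i = 0" by blast
  then show ?thesis by (simp add: x)
qed

lemma Av_dist_const_le_of_emeasure_eq_sum:
  fixes \<nu> :: "'i \<Rightarrow> 'a measure" and w :: "'i \<Rightarrow> ennreal" and f :: "'a \<Rightarrow> real"
  assumes J: "finite J" and sets_eq: "\<And>i. i \<in> J \<Longrightarrow> sets (\<nu> i) = sets M"
    and emeasure_eq: "\<And>A. A \<in> sets M \<Longrightarrow> emeasure M A = (\<Sum>i\<in>J. w i * emeasure (\<nu> i) A)"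
    and B: "B \<in> sets M" and f: "f \<in> borel_measurable M"
    and I: "I \<subseteq> J" and null: "\<And>j. j \<in> J - I \<Longrightarrow> emeasure (\<nu> j) B = 0"
    and i0: "i0 \<in> I" "0 < emeasure (\<nu> i0) B" "emeasure (\<nu> i0) B < \<top>"
  shows "Av M B (\<lambda>x. ennreal \<bar>f x - c\<bar>) \<le> of_nat (card I) * Av (\<nu> i0) B (\<lambda>z. ennreal \<bar>f z - c\<bar>)
    + (\<Sum>i\<in>I - {i0}. Av (\<nu> i) B (\<lambda>y. Av (\<nu> i0) B (\<lambda>z. ennreal \<bar>f y - f z\<bar>)))"
proof -
  define K where "K i = Av (\<nu> i) B (\<lambda>z. ennreal \<bar>f z - c\<bar>)" for i
  define D where "D i = Av (\<nu> i) B (\<lambda>y. Av (\<nu> i0) B (\<lambda>z. ennreal \<bar>f y - f z\<bar>))" for i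
  have finI: "finite I" using I J by (rule finite_subset)
  have "Av M B (\<lambda>x. ennreal \<bar>f x - c\<bar>) \<le> (\<Sum>i\<in>J. K i)"
    unfolding K_def using B f by (intro Av_le_sum_Av[OF J sets_eq emeasure_eq]) auto
  also have "\<dots> = (\<Sum>i\<in>I. K i)"
    using I null by (intro sum.mono_neutral_right J) (auto simp: K_def Av_def)
  also have "\<dots> = K i0 + (\<Sum>i\<in>I - {i0}. K i)"
    using finI i0 by (simp add: sum.remove)
  also have "\<dots> \<le> K i0 + (\<Sum>i\<in>I - {i0}. D i + K i0)"
    unfolding K_def D_def using i0 I sets_eq B f
    by (intro add_left_mono sum_mono Av_dist_const_le) auto
  also have "\<dots> = of_nat (card I) * K i0 + (\<Sum>i\<in>I - {i0}. D i)"
  proof -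
    have "card I = Suc (card (I - {i0}))" using finI i0 by (metis card_Suc_Diff1)
    then show ?thesis by (simp add: sum.distrib distrib_left distrib_right ac_simps)
  qed
  finally show ?thesis by (simp add: K_def D_def)
qed

lemma Osc_le_of_emeasure_eq_sum:
  fixes \<nu> :: "'i \<Rightarrow> 'a measure" and w :: "'i \<Rightarrow> ennreal" and f :: "'a \<Rightarrow> real"
  assumes J: "finite J" and sets_eq: "\<And>i. i \<in> J \<Longrightarrow> sets (\<nu> i) = sets M"
    and w: "\<And>i. i \<in> J \<Longrightarrow> 0 < w i"
    and emeasure_eq: "\<And>A. A \<in> sets M \<Longrightarrow> emeasure M A = (\<Sum>i\<in>J. w i * emeasure (\<nu> i) A)"
    and B: "B \<in> sets M" and f: "f \<in> borel_measurable M"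
    and I: "I \<subseteq> J" and null: "\<And>j. j \<in> J - I \<Longrightarrow> emeasure (\<nu> j) B = 0"
  shows "Osc M f B \<le> of_nat (card I) * ((\<Sum>i\<in>I. Osc (\<nu> i) f B)
    + (\<Sum>i\<in>I. \<Sum>j\<in>I - {i}. Av (\<nu> i) B (\<lambda>y. Av (\<nu> j) B (\<lambda>z. ennreal \<bar>f y - f z\<bar>))))"
proof -
  define D where "D i j = Av (\<nu> i) B (\<lambda>y. Av (\<nu> j) B (\<lambda>z. ennreal \<bar>f y - f z\<bar>))" for i j
  have finI: "finite I" using I J by (rule finite_subset)
  consider "\<And>g. Av M B g = 0" | i0 where "i0 \<in> I" "0 < emeasure (\<nu> i0) B" "emeasure (\<nu> i0) B < \<top>"
  proof (cases "\<exists>i\<in>I. 0 < emeasure (\<nu> i) B \<and> emeasure (\<nu> i) B < \<top>")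
    case False
    then have "emeasure (\<nu> i) B = 0 \<or> emeasure (\<nu> i) B = \<top>" if "i \<in> J" for i
      using that null by (cases "i \<in> I") (auto simp: less_top)
    then have "emeasure M B = 0 \<or> emeasure M B = \<top>"
      using sum_weighted_eq_0_or_top[OF J w emeasure_eq[OF B]] by blast
    then show ?thesis using that(1) by (auto simp: Av_def)
  qed (use that(2) in blast)
  then show ?thesis
  proof cases
    case 1
    then show ?thesis by (simp add: Osc_eq_0_of_Av_eq_0)
  next
    case (2 i0)
    define Dsum where "Dsum = (\<Sum>i\<in>I - {i0}. D i i0)"
    have "Osc M f B \<le> of_nat (card I) * Av (\<nu> i0) B (\<lambda>z. ennreal \<bar>f z - c\<bar>) + Dsum" for c
      using Osc_le_Av Av_dist_const_le_of_emeasure_eq_sum[OF J sets_eq emeasure_eq B f I null 2]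
      unfolding Dsum_def D_def by (rule order_trans)
    then have "Osc M f B \<le> (INF c. of_nat (card I) * Av (\<nu> i0) B (\<lambda>z. ennreal \<bar>f z - c\<bar>) + Dsum)"
      by (rule INF_greatest)
    also have "\<dots> = of_nat (card I) * Osc (\<nu> i0) f B + Dsum"
      by (simp add: INF_ennreal_cmult_add Osc_def of_nat_less_top)
    also have "\<dots> \<le> of_nat (card I) * (\<Sum>i\<in>I. Osc (\<nu> i) f B) + of_nat (card I) * (\<Sum>i\<in>I. \<Sum>j\<in>I - {i}. D i j)"
    proof (intro add_mono mult_left_mono)
      have "Dsum \<le> (\<Sum>i\<in>I. \<Sum>j\<in>I - {i}. D i j)"
        unfolding Dsum_def using finI 2
        by (intro order_trans[OF sum_mono sum_mono2]) (auto intro: member_le_sum)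
      moreover have "1 \<le> (of_nat (card I) :: ennreal)"
        using finI 2 by (auto simp: Suc_le_eq card_gt_0_iff)
      ultimately show "Dsum \<le> of_nat (card I) * (\<Sum>i\<in>I. \<Sum>j\<in>I - {i}. D i j)"
        using mult_mono[of 1 "of_nat (card I)"] by fastforce
    qed (use finI 2 in \<open>auto intro: member_le_sum\<close>)
    finally show ?thesis by (simp add: D_def distrib_left)
  qed
qed

section \<open>The measures \<open>hrestr\<close> and \<open>mk\<close>\<close>

lemma sets_measure_of_borel[simp]: "sets (measure_of UNIV (sets borel) \<mu>) = sets borel"
  using sets.sigma_sets_eq[of borel] by (simp add: sets_measure_of_conv)

lemma countably_additive_restrict:
  assumes "countably_additive (sets M) \<mu>" and "S \<in> sets M"
  shows "countably_additive (sets M) (\<lambda>A. \<mu> (A \<inter> S))"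
  unfolding countably_additive_def
proof (intro allI impI)
  fix A :: "nat \<Rightarrow> 'a set"
  assume "range A \<subseteq> sets M" "disjoint_family A" "(\<Union>i. A i) \<in> sets M"
  then have "range (\<lambda>i. A i \<inter> S) \<subseteq> sets M" "disjoint_family (\<lambda>i. A i \<inter> S)"
    "(\<Union>i. A i \<inter> S) \<in> sets M"
    using \<open>S \<in> sets M\<close> by (auto simp: disjoint_family_on_def)
  with assms(1) show "(\<Sum>i. \<mu> (A i \<inter> S)) = \<mu> ((\<Union>i. A i) \<inter> S)"
    unfolding countably_additive_def by simp
qed

lemma countably_additive_weighted_sum:
  fixes c :: "'i \<Rightarrow> ennreal"
  assumes "finite I" and "\<And>i. i \<in> I \<Longrightarrow> countably_additive M (\<mu> i)"
  shows "countably_additive M (\<lambda>A. \<Sum>i\<in>I. c i * \<mu> i A)"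
  unfolding countably_additive_def
proof (intro allI impI)
  fix A :: "nat \<Rightarrow> 'a set"
  assume "range A \<subseteq> M" "disjoint_family A" "(\<Union>i. A i) \<in> M"
  with assms(2) have "(\<Sum>n. \<mu> i (A n)) = \<mu> i (\<Union>n. A n)" if "i \<in> I" for i
    using that unfolding countably_additive_def by blast
  then have "(\<Sum>i\<in>I. \<Sum>n. c i * \<mu> i (A n)) = (\<Sum>i\<in>I. c i * \<mu> i (\<Union>n. A n))"
    by (intro sum.cong) simp_all
  moreover have "(\<Sum>n. \<Sum>i\<in>I. c i * \<mu> i (A n)) = (\<Sum>i\<in>I. \<Sum>n. c i * \<mu> i (A n))"
    by (rule suminf_sum) (rule summableI)
  ultimately show "(\<Sum>n. \<Sum>i\<in>I. c i * \<mu> i (A n)) = (\<Sum>i\<in>I. c i * \<mu> i (\<Union>n. A n))"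
    by simp
qed

lemma hmeasure_eq_cover_measure:
  "hmeasure mu th = cover_measure (\<lambda>(x, r). emeasure mu (cball x r) * ennreal (r powr - th))"
  unfolding hmeasure_def cover_measure_def hcont_delta_def cover_content_def ball_covers_def
  by (simp add: case_prod_beta')

lemma sets_hrestr[simp]: "sets (hrestr mu th S) = sets borel"
  by (simp add: hrestr_def)

lemma sets_mk[simp]: "sets (mk mu th ths S N k) = sets borel"
  by (simp add: mk_def)

lemma countably_additive_hmeasure_restrict:
  "S \<in> sets borel \<Longrightarrow> countably_additive (sets borel) (\<lambda>A. hmeasure mu th (A \<inter> S))"
  unfolding hmeasure_eq_cover_measure
  by (intro countably_additive_restrict countably_additive_cover_measure)

lemma emeasure_hrestr:
  assumes "S \<in> sets borel" and "A \<in> sets borel"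
  shows "emeasure (hrestr mu th S) A = hmeasure mu th (A \<inter> S)"
  unfolding hrestr_def
proof (rule emeasure_measure_of_sigma)
  show "positive (sets borel) (\<lambda>A. hmeasure mu th (A \<inter> S))"
    by (simp add: positive_def hmeasure_eq_cover_measure)
qed (use assms countably_additive_hmeasure_restrict in \<open>auto intro: sets.sigma_algebra_axioms[of borel, simplified]\<close>)

lemma emeasure_mk:
  assumes "\<And>i. i \<in> {1..N} \<Longrightarrow> S i \<in> sets borel" and "A \<in> sets borel"
  shows "emeasure (mk mu th ths S N k) A =
    (\<Sum>i\<in>{1..N}. ennreal (2 powr (real k * (th - ths i))) * emeasure (hrestr mu (ths i) (S i)) A)"
proof -
  have "emeasure (mk mu th ths S N k) A =
      (\<Sum>i\<in>{1..N}. ennreal (2 powr (real k * (th - ths i))) * hmeasure mu (ths i) (A \<inter> S i))"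
    unfolding mk_def
  proof (rule emeasure_measure_of_sigma)
    show "positive (sets borel)
        (\<lambda>A. \<Sum>i\<in>{1..N}. ennreal (2 powr (real k * (th - ths i))) * hmeasure mu (ths i) (A \<inter> S i))"
      by (simp add: positive_def hmeasure_eq_cover_measure)
    show "countably_additive (sets borel)
        (\<lambda>A. \<Sum>i\<in>{1..N}. ennreal (2 powr (real k * (th - ths i))) * hmeasure mu (ths i) (A \<inter> S i))"
      using assms(1)
      by (intro countably_additive_weighted_sum[where \<mu> = "\<lambda>i A. hmeasure mu (ths i) (A \<inter> S i)"]
          countably_additive_hmeasure_restrict) auto
  qed (use assms in \<open>auto intro: sets.sigma_algebra_axioms[of borel, simplified]\<close>)
  with assms show ?thesis
    by (simp add: emeasure_hrestr)
qed

lemma Osc_mk_le: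
  assumes S: "\<And>i. i \<in> {1..N} \<Longrightarrow> S i \<in> sets borel" and B: "B \<in> sets borel"
    and I: "I \<subseteq> {1..N}" and disjoint: "\<And>j. j \<in> {1..N} - I \<Longrightarrow> B \<inter> S j = {}"
    and f: "f \<in> borel_measurable borel"
  shows "Osc (mk mu th ths S N k) f B \<le> ennreal (real N) * ((\<Sum>i\<in>I. Osc (hrestr mu (ths i) (S i)) f B)
     + (\<Sum>i\<in>I. \<Sum>j\<in>I - {i}. Av (hrestr mu (ths i) (S i)) B
          (\<lambda>y. Av (hrestr mu (ths j) (S j)) B (\<lambda>z. ennreal \<bar>f y - f z\<bar>))))"
proof -
  have "Osc (mk mu th ths S N k) f B \<le> of_nat (card I) * ((\<Sum>i\<in>I. Osc (hrestr mu (ths i) (S i)) f B)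
     + (\<Sum>i\<in>I. \<Sum>j\<in>I - {i}. Av (hrestr mu (ths i) (S i)) B
          (\<lambda>y. Av (hrestr mu (ths j) (S j)) B (\<lambda>z. ennreal \<bar>f y - f z\<bar>))))"
  proof (rule Osc_le_of_emeasure_eq_sum[where J = "{1..N}" and \<nu> = "\<lambda>i. hrestr mu (ths i) (S i)"
        and w = "\<lambda>i. ennreal (2 powr (real k * (th - ths i)))"])
    show "emeasure (mk mu th ths S N k) A
        = (\<Sum>i\<in>{1..N}. ennreal (2 powr (real k * (th - ths i))) * emeasure (hrestr mu (ths i) (S i)) A)"
      if "A \<in> sets (mk mu th ths S N k)" for A
      by (rule emeasure_mk) (use that S in auto)
    show "emeasure (hrestr mu (ths j) (S j)) B = 0" if "j \<in> {1..N} - I" for j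
      using that S B disjoint[OF that] by (simp add: emeasure_hrestr hmeasure_eq_cover_measure)
  qed (use B I f in \<open>simp_all cong: measurable_cong_sets\<close>)
  also have "\<dots> \<le> ennreal (real N) * ((\<Sum>i\<in>I. Osc (hrestr mu (ths i) (S i)) f B)
     + (\<Sum>i\<in>I. \<Sum>j\<in>I - {i}. Av (hrestr mu (ths i) (S i)) B
          (\<lambda>y. Av (hrestr mu (ths j) (S j)) B (\<lambda>z. ennreal \<bar>f y - f z\<bar>))))"
  proof (rule mult_right_mono)
    have "card I \<le> N" using card_mono[OF _ I] by simp
    then show "of_nat (card I) \<le> ennreal (real N)"
      by (simp add: ennreal_of_nat_eq_real_of_nat)
  qed simp
  finally show ?thesis .
qed

theorem lemma3p6:
  fixes mu :: "'a::polish_space measure" and p thl th :: real and N :: nat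
    and ths :: "nat \<Rightarrow> real" and S :: "nat \<Rightarrow> 'a set"
  assumes mu: "mu_standing mu" and dbl: "unif_loc_doubling mu"
    and p: "1 < p" and PI: "weak_local_poincare mu p"
    and thl: "0 \<le> thl" "thl < min p (lower_dim mu)"
    and th: "thl \<le> th" "th < p"
    and N: "2 \<le> N"
    and ths0: "0 \<le> ths 1"
    and ths_mono: "\<And>i j. 1 \<le> i \<Longrightarrow> i < j \<Longrightarrow> j \<le> N \<Longrightarrow> ths i < ths j"
    and thsN: "ths N = thl"
    and S: "\<And>i. i \<in> {1..N} \<Longrightarrow> S i \<in> ADR mu (ths i)"
  shows "\<forall>c\<ge>1. \<exists>C>0. \<forall>k::nat. \<forall>xb::'a. \<forall>I.
     I \<subseteq> {1..N}
     \<and> (\<forall>i\<in>I. \<exists>xi\<in>S i. cball xi ((1/2)^k) \<subseteq> cball xb (c * (1/2)^k))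
     \<and> (\<forall>j\<in>{1..N} - I. cball xb (c * (1/2)^k) \<inter> S j = {})
     \<longrightarrow> (\<forall>f. loc_integrable (mk mu th ths S N 0) f \<longrightarrow>
          Osc (mk mu th ths S N k) f (cball xb (c * (1/2)^k))
          \<le> ennreal C * ((\<Sum>i\<in>I. Osc (hrestr mu (ths i) (S i)) f (cball xb (c * (1/2)^k)))
             + (\<Sum>i\<in>I. \<Sum>j\<in>I - {i}.
                 Av (hrestr mu (ths i) (S i)) (cball xb (c * (1/2)^k))
                   (\<lambda>y. Av (hrestr mu (ths j) (S j)) (cball xb (c * (1/2)^k))
                          (\<lambda>z. ennreal \<bar>f y - f z\<bar>)))))"
proof -
  \<comment> \<open>Of the hypotheses only the closedness of the \<open>S i\<close> is needed: since averages over null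
    sets are 0 by convention, no density bounds enter, and \<open>C = N\<close> works for every \<open>c\<close>.\<close>
  have S_borel: "S i \<in> sets borel" if "i \<in> {1..N}" for i
    using S[OF that] by (auto simp: ADR_def intro: borel_closed)
  show ?thesis
  proof (intro allI impI exI[of _ "real N"] conjI)
    show "0 < real N" using N by simp
  qed (auto intro!: Osc_mk_le S_borel simp: loc_integrable_def cong: measurable_cong_sets)
qed

end
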